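(* Let $\mathcal H$ be a Hopf algebra, $\mathcal A\subset\mathcal H$ a left coideal subalgebra and $\mu\in\mathcal A'$ a non-zero multiplicative functional on $\mathcal A$. If $\dim L^{\mathcal A}_\mu>0$ or $\dim R^{\mathcal A}_\mu>0$, then $\dim\mathcal A<\infty$.
   Context: $k$ is a field; $\mathcal H$ is a Hopf algebra over $k$ with comultiplication $\Delta$, counit $\varepsilon$ and invertible antipode $S$. A left coideal subalgebra is a subalgebra $\mathcal A\ni 1$ with $\Delta(\mathcal A)\subset\mathcal H\otimes\mathcal A$. A multiplicative functional is a linear $\mu:\mathcal A\to k$ with $\mu(ab)=\mu(a)\mu(b)$. $L^{\mathcal A}_\mu=\{\Lambda\in\mathcal A: a\Lambda=\mu(a)\Lambda\ \forall a\in\mathcal A\}$ and $R^{\mathcal A}_\mu=\{\Lambda\in\mathcal A:\Lambda a=\mu(a)\Lambda\ \forall a\in\mathcal A\}$. *)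

theory Defs
  imports Complex_Main
begin

text \<open>
  Elements of H \<otimes> H are represented by finite lists of pairs (sum of simple tensors);
  elements of H \<otimes> H \<otimes> H by lists of triples.  Two such representatives denote the
  same tensor iff they agree under all products of linear functionals (over a field,
  H' \<otimes> H' separates the points of H \<otimes> H).
\<close>

definition tensor2_eq ::
  "('k::field \<Rightarrow> 'h::ring_1 \<Rightarrow> 'h) \<Rightarrow> ('h \<times> 'h) list \<Rightarrow> ('h \<times> 'h) list \<Rightarrow> bool" where
  "tensor2_eq sc xs ys \<longleftrightarrow>
     (\<forall>\<phi> \<psi>. Vector_Spaces.linear sc ((*)) \<phi> \<longrightarrow> Vector_Spaces.linear sc ((*)) \<psi> \<longrightarrow>
        (\<Sum>(x, y)\<leftarrow>xs. \<phi> x * \<psi> y) = (\<Sum>(x, y)\<leftarrow>ys. \<phi> x * \<psi> y))"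

definition tensor3_eq ::
  "('k::field \<Rightarrow> 'h::ring_1 \<Rightarrow> 'h) \<Rightarrow> ('h \<times> 'h \<times> 'h) list \<Rightarrow> ('h \<times> 'h \<times> 'h) list \<Rightarrow> bool" where
  "tensor3_eq sc xs ys \<longleftrightarrow>
     (\<forall>\<phi> \<psi> \<chi>. Vector_Spaces.linear sc ((*)) \<phi> \<longrightarrow> Vector_Spaces.linear sc ((*)) \<psi> \<longrightarrow>
        Vector_Spaces.linear sc ((*)) \<chi> \<longrightarrow>
        (\<Sum>(x, y, z)\<leftarrow>xs. \<phi> x * \<psi> y * \<chi> z) = (\<Sum>(x, y, z)\<leftarrow>ys. \<phi> x * \<psi> y * \<chi> z))"

definition k_algebra :: "('k::field \<Rightarrow> 'h::ring_1 \<Rightarrow> 'h) \<Rightarrow> bool" where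
  "k_algebra sc \<longleftrightarrow> vector_space sc \<and>
     (\<forall>c a b. sc c (a * b) = sc c a * b \<and> sc c (a * b) = a * sc c b)"

definition hopf_algebra ::
  "('k::field \<Rightarrow> 'h::ring_1 \<Rightarrow> 'h) \<Rightarrow> ('h \<Rightarrow> ('h \<times> 'h) list) \<Rightarrow> ('h \<Rightarrow> 'k) \<Rightarrow> ('h \<Rightarrow> 'h) \<Rightarrow> bool" where
  "hopf_algebra sc D eps S \<longleftrightarrow>
     k_algebra sc \<and>
     \<comment> \<open>D is linear\<close>
     (\<forall>a b. tensor2_eq sc (D (a + b)) (D a @ D b)) \<and>
     (\<forall>c a. tensor2_eq sc (D (sc c a)) (map (\<lambda>(x, y). (sc c x, y)) (D a))) \<and>
     \<comment> \<open>D is a unital algebra homomorphism\<close>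
     (\<forall>a b. tensor2_eq sc (D (a * b)) [(x * x', y * y'). (x, y) \<leftarrow> D a, (x', y') \<leftarrow> D b]) \<and>
     tensor2_eq sc (D 1) [(1, 1)] \<and>
     \<comment> \<open>coassociativity\<close>
     (\<forall>a. tensor3_eq sc
            (concat (map (\<lambda>(x, y). map (\<lambda>(u, v). (u, v, y)) (D x)) (D a)))
            (concat (map (\<lambda>(x, y). map (\<lambda>(u, v). (x, u, v)) (D y)) (D a)))) \<and>
     \<comment> \<open>counit: linear, unital, multiplicative, counit axioms\<close>
     Vector_Spaces.linear sc ((*)) eps \<and>
     eps 1 = 1 \<and> (\<forall>a b. eps (a * b) = eps a * eps b) \<and>
     (\<forall>a. (\<Sum>(x, y)\<leftarrow>D a. sc (eps x) y) = a) \<and>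
     (\<forall>a. (\<Sum>(x, y)\<leftarrow>D a. sc (eps y) x) = a) \<and>
     \<comment> \<open>antipode: linear, antipode axioms, invertible\<close>
     Vector_Spaces.linear sc sc S \<and>
     (\<forall>a. (\<Sum>(x, y)\<leftarrow>D a. S x * y) = sc (eps a) 1) \<and>
     (\<forall>a. (\<Sum>(x, y)\<leftarrow>D a. x * S y) = sc (eps a) 1) \<and>
     bij S"

definition left_coideal_subalgebra ::
  "('k::field \<Rightarrow> 'h::ring_1 \<Rightarrow> 'h) \<Rightarrow> ('h \<Rightarrow> ('h \<times> 'h) list) \<Rightarrow> 'h set \<Rightarrow> bool" where
  "left_coideal_subalgebra sc D A \<longleftrightarrow>
     module.subspace sc A \<and> 1 \<in> A \<and> (\<forall>a\<in>A. \<forall>b\<in>A. a * b \<in> A) \<and>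
     (\<forall>a\<in>A. \<exists>ts. tensor2_eq sc (D a) ts \<and> (\<forall>(x, y)\<in>set ts. y \<in> A))"

definition multiplicative_functional ::
  "('k::field \<Rightarrow> 'h::ring_1 \<Rightarrow> 'h) \<Rightarrow> 'h set \<Rightarrow> ('h \<Rightarrow> 'k) \<Rightarrow> bool" where
  "multiplicative_functional sc A \<mu> \<longleftrightarrow>
     (\<forall>a\<in>A. \<forall>b\<in>A. \<mu> (a + b) = \<mu> a + \<mu> b) \<and>
     (\<forall>c. \<forall>a\<in>A. \<mu> (sc c a) = c * \<mu> a) \<and>
     (\<forall>a\<in>A. \<forall>b\<in>A. \<mu> (a * b) = \<mu> a * \<mu> b)"

definition L_space :: "('k::field \<Rightarrow> 'h::ring_1 \<Rightarrow> 'h) \<Rightarrow> 'h set \<Rightarrow> ('h \<Rightarrow> 'k) \<Rightarrow> 'h set" where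
  "L_space sc A \<mu> = {\<Lambda>\<in>A. \<forall>a\<in>A. a * \<Lambda> = sc (\<mu> a) \<Lambda>}"

definition R_space :: "('k::field \<Rightarrow> 'h::ring_1 \<Rightarrow> 'h) \<Rightarrow> 'h set \<Rightarrow> ('h \<Rightarrow> 'k) \<Rightarrow> 'h set" where
  "R_space sc A \<mu> = {\<Lambda>\<in>A. \<forall>a\<in>A. \<Lambda> * a = sc (\<mu> a) \<Lambda>}"

definition finite_dim :: "('k::field \<Rightarrow> 'h::ring_1 \<Rightarrow> 'h) \<Rightarrow> 'h set \<Rightarrow> bool" where
  "finite_dim sc V \<longleftrightarrow> (\<exists>B. finite B \<and> B \<subseteq> V \<and> module.span sc B = V)"

end

theory Submission
  imports Defs
begin

text \<open>
  Write \<open>a1 \<otimes> a2\<close> for \<open>D a\<close> (Sweedler notation) and let \<open>\<Lambda> \<noteq> 0\<close> satisfy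
  \<open>q \<Lambda> = \<mu>(q) \<Lambda>\<close> for \<open>q \<in> A\<close>.  For \<open>a \<in> A\<close> and a functional \<open>\<phi>\<close>,
  \<open>a (\<phi> \<otimes> id) D\<Lambda> = \<Sum> (\<phi>(S a1 \<cdot>) \<otimes> id) D(a2 \<Lambda>) = \<Sum> \<mu>(a2) (\<phi>(S a1 \<cdot>) \<otimes> id) D\<Lambda>\<close>
  because \<open>a2 \<in> A\<close>, so it lies in the span \<open>Y\<close> of the finitely many right legs of \<open>D\<Lambda>\<close>.
  Choosing a functional \<open>\<psi>\<close> with \<open>\<psi>(\<Lambda>) \<noteq> 0\<close>,
  \<open>\<psi>(\<Lambda>) a = \<Sum> \<psi>(\<Lambda>1) a \<Lambda>3 S\<^sup>-\<^sup>1(\<Lambda>2)\<close>, and expanding \<open>\<Lambda>1\<close> in a basis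
  rewrites the right-hand side as a combination of the elements \<open>y S\<^sup>-\<^sup>1(v)\<close>, with \<open>y \<in> Y\<close> and
  \<open>v\<close> among finitely many legs.  So \<open>A\<close> lies in a finite-dimensional space.  Right
  eigenvectors are handled by the same computation in the opposite algebra, whose antipode is
  \<open>S\<^sup>-\<^sup>1\<close>.
\<close>

lemma sum_list_map_concat:
  "(\<Sum>x\<leftarrow>concat (map h l). g x) = (\<Sum>t\<leftarrow>l. \<Sum>x\<leftarrow>h t. g x)"
  by (induction l) auto

lemma sum_list_commute:
  fixes f :: "'a \<Rightarrow> 'b \<Rightarrow> 'c::comm_monoid_add"
  shows "(\<Sum>x\<leftarrow>xs. \<Sum>y\<leftarrow>ys. f x y) = (\<Sum>y\<leftarrow>ys. \<Sum>x\<leftarrow>xs. f x y)"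
  by (induction xs) (auto simp: sum_list_addf)

lemma sum_list_sum_commute:
  fixes f :: "'a \<Rightarrow> 'b \<Rightarrow> 'c::comm_monoid_add"
  shows "(\<Sum>x\<leftarrow>xs. \<Sum>y\<in>F. f x y) = (\<Sum>y\<in>F. \<Sum>x\<leftarrow>xs. f x y)"
  by (induction xs) (auto simp: sum.distrib)

lemma sum_list_pairs_commute:
  fixes f :: "'a \<Rightarrow> 'b \<Rightarrow> 'c \<Rightarrow> 'd \<Rightarrow> 'e::comm_monoid_add"
  shows "(\<Sum>(x,y)\<leftarrow>l1. \<Sum>(u,v)\<leftarrow>l2. f x y u v) = (\<Sum>(u,v)\<leftarrow>l2. \<Sum>(x,y)\<leftarrow>l1. f x y u v)"
  using sum_list_commute[where f="\<lambda>p q. f (fst p) (snd p) (fst q) (snd q)" and xs=l1 and ys=l2]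
  by (simp add: case_prod_unfold)

lemma sum_list_pairs_cong:
  "(\<And>x y. (x,y) \<in> set l \<Longrightarrow> f x y = g x y) \<Longrightarrow> (\<Sum>(x,y)\<leftarrow>l. f x y) = (\<Sum>(x,y)\<leftarrow>l. g x y)"
  by (intro arg_cong[where f=sum_list] map_cong) auto

lemma (in module) span_sum_list:
  "(\<And>t. t \<in> set l \<Longrightarrow> g t \<in> span X) \<Longrightarrow> (\<Sum>t\<leftarrow>l. g t) \<in> span X"
  by (induction l) (auto intro: span_add span_zero)

locale hopf =
  fixes sc :: "'k::field \<Rightarrow> 'h::ring_1 \<Rightarrow> 'h" and D :: "'h \<Rightarrow> ('h \<times> 'h) list"
    and eps :: "'h \<Rightarrow> 'k" and S :: "'h \<Rightarrow> 'h"
  assumes hopf_algebra: "hopf_algebra sc D eps S"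
begin

lemma k_algebra: "k_algebra sc"
  using hopf_algebra unfolding hopf_algebra_def by auto

sublocale V: vector_space sc
  using k_algebra unfolding k_algebra_def by auto

sublocale VV: vector_space_pair sc sc ..

sublocale VK: vector_space_pair sc "(*)"
  by unfold_locales (auto simp: algebra_simps)

abbreviation lin :: "('h \<Rightarrow> 'h) \<Rightarrow> bool" where
  "lin f \<equiv> Vector_Spaces.linear sc sc f"

abbreviation functional :: "('h \<Rightarrow> 'k) \<Rightarrow> bool" where
  "functional \<phi> \<equiv> Vector_Spaces.linear sc (*) \<phi>"

lemma lin_iff: "lin f \<longleftrightarrow> (\<forall>x y. f (x + y) = f x + f y) \<and> (\<forall>c x. f (sc c x) = sc c (f x))"
  unfolding Vector_Spaces.linear_iff using V.vector_space_axioms by auto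

lemma lin_sum_list: "lin f \<Longrightarrow> f (\<Sum>t\<leftarrow>l. g t) = (\<Sum>t\<leftarrow>l. f (g t))"
  by (induction l) (auto simp: VV.linear_add VV.linear_0)

lemma functional_sum_list: "functional \<phi> \<Longrightarrow> \<phi> (\<Sum>t\<leftarrow>l. g t) = (\<Sum>t\<leftarrow>l. \<phi> (g t))"
  by (induction l) (auto simp: VK.linear_add VK.linear_0)

lemma scale_sum_list_left: "sc (\<Sum>t\<leftarrow>l. f t) x = (\<Sum>t\<leftarrow>l. sc (f t) x)"
  by (induction l) (auto simp: V.scale_left_distrib)

lemma sc_mult_left: "sc c (a * b) = sc c a * b"
  and sc_mult_right: "sc c (a * b) = a * sc c b"
  using k_algebra unfolding k_algebra_def by blast+

lemma lin_id [intro!]: "lin (\<lambda>x. x)"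
  by (rule V.linear_ident)

lemma lin_mult_left [intro!]: "lin g \<Longrightarrow> lin (\<lambda>x. c * g x)"
  unfolding lin_iff by (auto simp: distrib_left sc_mult_right)

lemma lin_mult_right [intro!]: "lin g \<Longrightarrow> lin (\<lambda>x. g x * c)"
  unfolding lin_iff by (auto simp: distrib_right sc_mult_left)

lemma lin_scale [intro!]: "lin g \<Longrightarrow> lin (\<lambda>x. sc c (g x))"
  by (rule VV.linear_compose_scale_right)

lemma lin_scale_functional [intro!]: "functional \<phi> \<Longrightarrow> lin g \<Longrightarrow> lin (\<lambda>x. sc (\<phi> (g x)) y)"
  unfolding lin_iff by (auto simp: VK.linear_add VK.linear_scale V.scale_left_distrib)

lemma lin_sum_list_fun [intro!]: "(\<And>u v. lin (G u v)) \<Longrightarrow> lin (\<lambda>x. \<Sum>(u,v)\<leftarrow>l. G u v x)"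
  unfolding lin_iff by (induction l) (auto simp: V.scale_right_distrib)

lemma lin_compose: "lin f \<Longrightarrow> lin g \<Longrightarrow> lin (\<lambda>x. f (g x))"
  using Vector_Spaces.linear_compose[of sc sc g sc f] by (simp add: comp_def)

lemma functional_comp_lin: "functional \<phi> \<Longrightarrow> lin g \<Longrightarrow> functional (\<lambda>x. \<phi> (g x))"
  using Vector_Spaces.linear_compose[of sc sc g "(*)" \<phi>] by (simp add: comp_def)

lemma finite_dim_if_subset_span:
  assumes "V.subspace A" "finite F" "A \<subseteq> V.span F"
  shows "finite_dim sc A"
proof -
  obtain B where B: "B \<subseteq> A" "V.independent B" "A \<subseteq> V.span B"
    using V.maximal_independent_subset[of A] by blast
  have "finite B"
    using V.independent_span_bound[OF assms(2) B(2)] B(1) assms(3) by blast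
  moreover have "V.span B = A"
    using V.span_minimal[OF B(1) assms(1)] B(3) by blast
  ultimately show ?thesis
    unfolding finite_dim_def using B(1) by blast
qed

section \<open>Sums over tensor representatives\<close>

definition basis :: "'h set" where
  "basis = V.extend_basis {}"

definition coord :: "'h \<Rightarrow> 'h \<Rightarrow> 'k" where
  "coord x b = V.representation basis x b"

lemma basis_independent: "V.independent basis" and span_basis: "V.span basis = UNIV"
  unfolding basis_def
  using V.independent_extend_basis[OF V.independent_empty] V.span_extend_basis[OF V.independent_empty]
  by auto

lemma functional_coord: "functional (\<lambda>x. coord x b)"
  unfolding coord_def by (rule V.linear_representation[OF basis_independent span_basis])

lemma finite_coord_support: "finite {b. coord x b \<noteq> 0}"
  unfolding coord_def by (rule V.finite_representation)

lemma sum_coord_scale: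
  assumes "finite F" "{b. coord x b \<noteq> 0} \<subseteq> F"
  shows "(\<Sum>b\<in>F. sc (coord x b) b) = x"
proof -
  have "(\<Sum>b\<in>F. sc (coord x b) b) = (\<Sum>b | coord x b \<noteq> 0. sc (coord x b) b)"
    using assms by (intro sum.mono_neutral_cong_right) auto
  also have "\<dots> = x"
    unfolding coord_def using basis_independent span_basis
    by (intro V.sum_nonzero_representation_eq) auto
  finally show ?thesis .
qed

lemma coord_nonzero: "x \<noteq> 0 \<Longrightarrow> \<exists>b. coord x b \<noteq> 0"
  using sum_coord_scale[of "{}" x] by auto

lemma eq_if_functionals_eq:
  assumes "\<And>\<phi>. functional \<phi> \<Longrightarrow> \<phi> x = \<phi> y"
  shows "x = y"
proof (rule ccontr)
  assume "x \<noteq> y"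
  then obtain b where "coord (x - y) b \<noteq> 0"
    using coord_nonzero[of "x - y"] by auto
  then show False
    using assms[OF functional_coord[of b]] VK.linear_diff[OF functional_coord[of b]] by simp
qed

text \<open>
  A bilinear sum over a representative of a tensor
  is determined by its contractions with the coordinate functionals, and these only depend on the
  tensor because functionals separate points; this is what makes \<open>tensor2_eq\<close> usable.
\<close>
definition contract :: "('h \<Rightarrow> 'k) \<Rightarrow> ('h \<times> 'h) list \<Rightarrow> 'h" where
  "contract \<phi> ts = (\<Sum>(x,y)\<leftarrow>ts. sc (\<phi> x) y)"

lemma contract_eq_if_tensor2_eq:
  assumes "tensor2_eq sc xs ys" "functional \<kappa>"
  shows "contract \<kappa> xs = contract \<kappa> ys"
proof (rule eq_if_functionals_eq)
  fix \<chi> assume \<chi>: "functional \<chi>"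
  have "\<chi> (contract \<kappa> zs) = (\<Sum>(x,y)\<leftarrow>zs. \<kappa> x * \<chi> y)" for zs
    by (simp add: contract_def functional_sum_list[OF \<chi>] VK.linear_scale[OF \<chi>] case_prod_unfold)
  then show "\<chi> (contract \<kappa> xs) = \<chi> (contract \<kappa> ys)"
    using assms \<chi> unfolding tensor2_eq_def by auto
qed

lemma contract_in_span_right_legs: "contract \<kappa> ts \<in> V.span (snd ` set ts)"
  unfolding contract_def case_prod_unfold
  by (intro V.span_sum_list V.span_scale V.span_base) auto

definition leg_support :: "('h \<times> 'c) list \<Rightarrow> 'h set" where
  "leg_support l = (\<Union>x\<in>fst ` set l. {b. coord x b \<noteq> 0})"

lemma finite_leg_support: "finite (leg_support l)"
  unfolding leg_support_def using finite_coord_support by auto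

lemma sum_expand_first_leg:
  assumes "\<And>c. lin (\<lambda>x. g x c)" "finite F" "leg_support l \<subseteq> F"
  shows "(\<Sum>(x,c)\<leftarrow>l. g x c) = (\<Sum>b\<in>F. \<Sum>(x,c)\<leftarrow>l. sc (coord x b) (g b c))"
proof -
  have "g x c = (\<Sum>b\<in>F. sc (coord x b) (g b c))" if "x \<in> fst ` set l" for x c
  proof -
    have "{b. coord x b \<noteq> 0} \<subseteq> F"
      using that assms(3) unfolding leg_support_def by auto
    then have "g x c = g (\<Sum>b\<in>F. sc (coord x b) b) c"
      using sum_coord_scale[OF assms(2)] by simp
    also have "\<dots> = (\<Sum>b\<in>F. sc (coord x b) (g b c))"
      by (simp add: VV.linear_sum[OF assms(1)] VV.linear_scale[OF assms(1)])
    finally show ?thesis .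
  qed
  then have "(\<Sum>(x,c)\<leftarrow>l. g x c) = (\<Sum>(x,c)\<leftarrow>l. \<Sum>b\<in>F. sc (coord x b) (g b c))"
    by (intro sum_list_pairs_cong) force
  also have "\<dots> = (\<Sum>b\<in>F. \<Sum>(x,c)\<leftarrow>l. sc (coord x b) (g b c))"
    using sum_list_sum_commute[where f="\<lambda>p b. sc (coord (fst p) b) (g b (snd p))" and xs=l]
    by (simp add: case_prod_unfold)
  finally show ?thesis .
qed

lemma sum_bilinear_contract:
  assumes "\<And>y. lin (\<lambda>x. f x y)" "\<And>x. lin (f x)" "finite F" "leg_support l \<subseteq> F"
  shows "(\<Sum>(x,y)\<leftarrow>l. f x y) = (\<Sum>b\<in>F. f b (contract (\<lambda>x. coord x b) l))"
proof -
  have "(\<Sum>(x,y)\<leftarrow>l. f x y) = (\<Sum>b\<in>F. \<Sum>(x,y)\<leftarrow>l. sc (coord x b) (f b y))"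
    by (rule sum_expand_first_leg[OF assms(1,3,4)])
  also have "\<dots> = (\<Sum>b\<in>F. f b (contract (\<lambda>x. coord x b) l))"
    by (simp add: contract_def case_prod_unfold lin_sum_list[OF assms(2)] VV.linear_scale[OF assms(2)])
  finally show ?thesis .
qed

lemma sum_tensor2_eq:
  assumes "tensor2_eq sc xs ys" "\<And>y. lin (\<lambda>x. f x y)" "\<And>x. lin (f x)"
  shows "(\<Sum>(x,y)\<leftarrow>xs. f x y) = (\<Sum>(x,y)\<leftarrow>ys. f x y)"
proof -
  let ?F = "leg_support (xs @ ys)"
  have "(\<Sum>(x,y)\<leftarrow>zs. f x y) = (\<Sum>b\<in>?F. f b (contract (\<lambda>x. coord x b) zs))"
    if "zs \<in> {xs, ys}" for zs
    by (rule sum_bilinear_contract[OF assms(2,3) finite_leg_support])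
      (use that in \<open>auto simp: leg_support_def\<close>)
  then show ?thesis
    by (simp add: contract_eq_if_tensor2_eq[OF assms(1) functional_coord])
qed

lemma sum_tensor3_eq:
  assumes "tensor3_eq sc xs ys" "\<And>y z. lin (\<lambda>x. f x y z)"
    and "\<And>x z. lin (\<lambda>y. f x y z)" "\<And>x y. lin (f x y)"
  shows "(\<Sum>(x,y,z)\<leftarrow>xs. f x y z) = (\<Sum>(x,y,z)\<leftarrow>ys. f x y z)"
proof -
  define slice :: "'h \<Rightarrow> ('h \<times> 'h \<times> 'h) list \<Rightarrow> ('h \<times> 'h) list"
    where "slice b zs = map (\<lambda>(x,y,z). (y, sc (coord x b) z)) zs" for b zs
  have sum_slice: "(\<Sum>(x,y,z)\<leftarrow>zs. sc (coord x b) (f b y z)) = (\<Sum>(y,z)\<leftarrow>slice b zs. f b y z)"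
    for b zs
    unfolding slice_def by (induction zs) (auto simp: VV.linear_scale[OF assms(4)])
  have "tensor2_eq sc (slice b xs) (slice b ys)" for b
    unfolding tensor2_eq_def
  proof (intro allI impI)
    fix \<phi> \<psi> assume \<phi>: "functional \<phi>" and \<psi>: "functional \<psi>"
    have "(\<Sum>(y,z)\<leftarrow>slice b zs. \<phi> y * \<psi> z) = (\<Sum>(x,y,z)\<leftarrow>zs. coord x b * \<phi> y * \<psi> z)" for zs
      unfolding slice_def by (induction zs) (auto simp: VK.linear_scale[OF \<psi>])
    then show "(\<Sum>(y,z)\<leftarrow>slice b xs. \<phi> y * \<psi> z) = (\<Sum>(y,z)\<leftarrow>slice b ys. \<phi> y * \<psi> z)"
      using assms(1) functional_coord[of b] \<phi> \<psi> unfolding tensor3_eq_def by auto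
  qed
  then have slices_eq: "(\<Sum>(y,z)\<leftarrow>slice b xs. f b y z) = (\<Sum>(y,z)\<leftarrow>slice b ys. f b y z)" for b
    by (rule sum_tensor2_eq) (auto intro: assms(3,4))
  let ?F = "leg_support (xs @ ys)"
  have "(\<Sum>(x,y,z)\<leftarrow>zs. f x y z) = (\<Sum>b\<in>?F. \<Sum>(y,z)\<leftarrow>slice b zs. f b y z)"
    if "leg_support zs \<subseteq> ?F" for zs
    using sum_expand_first_leg[where g="\<lambda>x (y,z). f x y z", OF _ finite_leg_support that]
      assms(2) sum_slice
    by (simp add: case_prod_unfold)
  moreover have "leg_support xs \<subseteq> ?F" "leg_support ys \<subseteq> ?F"
    unfolding leg_support_def by auto
  ultimately show ?thesis
    using slices_eq by simp
qed

lemma D_add: "tensor2_eq sc (D (a + b)) (D a @ D b)"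
  and D_scale: "tensor2_eq sc (D (sc c a)) (map (\<lambda>(x, y). (sc c x, y)) (D a))"
  and D_mult: "tensor2_eq sc (D (a * b)) [(x * x', y * y'). (x, y) \<leftarrow> D a, (x', y') \<leftarrow> D b]"
  and D_one: "tensor2_eq sc (D 1) [(1, 1)]"
  and D_coassoc: "tensor3_eq sc
            (concat (map (\<lambda>(x, y). map (\<lambda>(u, v). (u, v, y)) (D x)) (D a)))
            (concat (map (\<lambda>(x, y). map (\<lambda>(u, v). (x, u, v)) (D y)) (D a)))"
  and counit_one: "eps 1 = 1"
  and counit_mult: "eps (a * b) = eps a * eps b"
  and counit_left: "(\<Sum>(x, y)\<leftarrow>D a. sc (eps x) y) = a"
  and counit_right: "(\<Sum>(x, y)\<leftarrow>D a. sc (eps y) x) = a"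
  and antipode_linear: "lin S"
  and antipode_left: "(\<Sum>(x, y)\<leftarrow>D a. S x * y) = sc (eps a) 1"
  and antipode_right: "(\<Sum>(x, y)\<leftarrow>D a. x * S y) = sc (eps a) 1"
  and antipode_bij: "bij S"
  using hopf_algebra unfolding hopf_algebra_def by blast+

lemma lin_antipode_compose [intro!]: "lin g \<Longrightarrow> lin (\<lambda>x. S (g x))"
  by (rule lin_compose[OF antipode_linear])

lemma lin_sum_D:
  assumes "\<And>y. lin (\<lambda>x. f x y)" "\<And>x. lin (f x)"
  shows "lin (\<lambda>q. \<Sum>(x,y)\<leftarrow>D q. f x y)"
  unfolding lin_iff
proof (intro conjI allI)
  fix a b
  show "(\<Sum>(x,y)\<leftarrow>D (a + b). f x y) = (\<Sum>(x,y)\<leftarrow>D a. f x y) + (\<Sum>(x,y)\<leftarrow>D b. f x y)"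
    using sum_tensor2_eq[OF D_add assms] by simp
next
  fix c a
  have "(\<Sum>(x,y)\<leftarrow>D (sc c a). f x y) = (\<Sum>(x,y)\<leftarrow>map (\<lambda>(x, y). (sc c x, y)) (D a). f x y)"
    using sum_tensor2_eq[OF D_scale assms] .
  also have "\<dots> = sc c (\<Sum>(x,y)\<leftarrow>D a. f x y)"
    by (simp add: VV.linear_scale[OF assms(1)] lin_sum_list[OF lin_scale[OF lin_id]]
        case_prod_unfold comp_def)
  finally show "(\<Sum>(x,y)\<leftarrow>D (sc c a). f x y) = sc c (\<Sum>(x,y)\<leftarrow>D a. f x y)" .
qed

lemma lin_contract_D: "functional \<kappa> \<Longrightarrow> lin g \<Longrightarrow> lin (\<lambda>q. contract \<kappa> (D (g q)))"
  unfolding contract_def by (intro lin_compose[OF lin_sum_D]) auto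

lemma sum_D_mult:
  assumes "\<And>y. lin (\<lambda>x. f x y)" "\<And>x. lin (f x)"
  shows "(\<Sum>(x,y)\<leftarrow>D (a * b). f x y) = (\<Sum>(x,y)\<leftarrow>D a. \<Sum>(x',y')\<leftarrow>D b. f (x * x') (y * y'))"
  using sum_tensor2_eq[OF D_mult assms] by (simp add: sum_list_map_concat case_prod_unfold comp_def)

lemma sum_D_one:
  assumes "\<And>y. lin (\<lambda>x. f x y)" "\<And>x. lin (f x)"
  shows "(\<Sum>(x,y)\<leftarrow>D 1. f x y) = f 1 1"
  using sum_tensor2_eq[OF D_one assms] by simp

lemma sum_D_coassoc:
  assumes "\<And>y z. lin (\<lambda>x. f x y z)" "\<And>x z. lin (\<lambda>y. f x y z)" "\<And>x y. lin (f x y)"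
  shows "(\<Sum>(x,y)\<leftarrow>D a. \<Sum>(u,v)\<leftarrow>D x. f u v y) = (\<Sum>(x,y)\<leftarrow>D a. \<Sum>(u,v)\<leftarrow>D y. f x u v)"
  using sum_tensor3_eq[OF D_coassoc assms] by (simp add: sum_list_map_concat case_prod_unfold comp_def)

lemma lin_eq_sum_counit_left: "lin g \<Longrightarrow> g a = (\<Sum>(x,y)\<leftarrow>D a. sc (eps x) (g y))"
  using arg_cong[OF counit_left[of a], of g]
  by (simp add: lin_sum_list VV.linear_scale case_prod_unfold)

lemma lin_eq_sum_counit_right: "lin g \<Longrightarrow> g a = (\<Sum>(x,y)\<leftarrow>D a. sc (eps y) (g x))"
  using arg_cong[OF counit_right[of a], of g]
  by (simp add: lin_sum_list VV.linear_scale case_prod_unfold)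

section \<open>The antipode and its inverse\<close>

lemma mult_scale_one: "x * sc c 1 = sc c x"
  by (metis sc_mult_right mult_1_right)

lemma antipode_one: "S 1 = 1"
proof -
  have "(\<Sum>(x,y)\<leftarrow>D 1. S x * y) = S 1 * 1"
    by (rule sum_D_one) auto
  then show ?thesis
    using antipode_left[of 1] by (simp add: counit_one)
qed

lemma sum_antipode_left_between: "(\<Sum>(x,y)\<leftarrow>D c. P * S x * (y * W)) = sc (eps c) (P * W)"
proof -
  have "(\<Sum>(x,y)\<leftarrow>D c. P * S x * (y * W)) = (\<Sum>(x,y)\<leftarrow>D c. P * (S x * y) * W)"
    by (simp add: mult.assoc)
  also have "\<dots> = P * (\<Sum>(x,y)\<leftarrow>D c. S x * y) * W"
    by (simp add: sum_list_const_mult sum_list_mult_const case_prod_unfold)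
  also have "\<dots> = sc (eps c) (P * W)"
    by (simp add: antipode_left mult_scale_one sc_mult_left)
  finally show ?thesis .
qed

lemma antipode_mult_antipode_eq_sum:
  "S b * S a = (\<Sum>(b1,b2)\<leftarrow>D b. \<Sum>(b11,b12)\<leftarrow>D b1. \<Sum>(a1,a2)\<leftarrow>D a. \<Sum>(a11,a12)\<leftarrow>D a1.
      S b11 * S a11 * (a12 * b12 * S (a2 * b2)))"
proof -
  have counit_a: "S y * S a = (\<Sum>(a1,a2)\<leftarrow>D a. sc (eps a2) (S y * S a1))" for y
    by (rule lin_eq_sum_counit_right) auto
  have "S b * S a = (\<Sum>(b1,b2)\<leftarrow>D b. sc (eps b2) (S b1 * S a))"
    by (rule lin_eq_sum_counit_right) auto
  also have "\<dots> = (\<Sum>(b1,b2)\<leftarrow>D b. \<Sum>(a1,a2)\<leftarrow>D a. sc (eps b2) (sc (eps a2) (S b1 * S a1)))"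
    by (simp only: counit_a lin_sum_list[OF lin_scale[OF lin_id]] case_prod_unfold)
  also have "\<dots> = (\<Sum>(b1,b2)\<leftarrow>D b. \<Sum>(a1,a2)\<leftarrow>D a. S b1 * S a1 * sc (eps (a2 * b2)) 1)"
    by (simp add: counit_mult mult_scale_one mult.commute)
  also have "\<dots> = (\<Sum>(b1,b2)\<leftarrow>D b. \<Sum>(a1,a2)\<leftarrow>D a. \<Sum>(c1,c2)\<leftarrow>D (a2 * b2).
      S b1 * S a1 * (c1 * S c2))"
    unfolding antipode_right[symmetric] by (simp add: sum_list_const_mult case_prod_unfold)
  also have "\<dots> = (\<Sum>(b1,b2)\<leftarrow>D b. \<Sum>(a1,a2)\<leftarrow>D a. \<Sum>(a21,a22)\<leftarrow>D a2. \<Sum>(b21,b22)\<leftarrow>D b2.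
      S b1 * S a1 * (a21 * b21 * S (a22 * b22)))"
    by (intro sum_list_pairs_cong sum_D_mult) auto
  also have "\<dots> = (\<Sum>(b1,b2)\<leftarrow>D b. \<Sum>(a1,a2)\<leftarrow>D a. \<Sum>(b21,b22)\<leftarrow>D b2. \<Sum>(a21,a22)\<leftarrow>D a2.
      S b1 * S a1 * (a21 * b21 * S (a22 * b22)))"
    by (intro sum_list_pairs_cong sum_list_pairs_commute)
  also have "\<dots> = (\<Sum>(b1,b2)\<leftarrow>D b. \<Sum>(b21,b22)\<leftarrow>D b2. \<Sum>(a1,a2)\<leftarrow>D a. \<Sum>(a21,a22)\<leftarrow>D a2.
      S b1 * S a1 * (a21 * b21 * S (a22 * b22)))"
    by (intro sum_list_pairs_cong sum_list_pairs_commute)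
  also have "\<dots> = (\<Sum>(b1,b2)\<leftarrow>D b. \<Sum>(b11,b12)\<leftarrow>D b1. \<Sum>(a1,a2)\<leftarrow>D a. \<Sum>(a21,a22)\<leftarrow>D a2.
      S b11 * S a1 * (a21 * b12 * S (a22 * b2)))"
    by (rule sum_D_coassoc[symmetric]) auto
  also have "\<dots> = (\<Sum>(b1,b2)\<leftarrow>D b. \<Sum>(b11,b12)\<leftarrow>D b1. \<Sum>(a1,a2)\<leftarrow>D a. \<Sum>(a11,a12)\<leftarrow>D a1.
      S b11 * S a11 * (a12 * b12 * S (a2 * b2)))"
    by (intro sum_list_pairs_cong sum_D_coassoc[symmetric]) auto
  finally show ?thesis .
qed

lemma antipode_mult_eq_sum:
  "S (a * b) = (\<Sum>(b1,b2)\<leftarrow>D b. \<Sum>(b11,b12)\<leftarrow>D b1. \<Sum>(a1,a2)\<leftarrow>D a. \<Sum>(a11,a12)\<leftarrow>D a1.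
      S b11 * S a11 * (a12 * b12 * S (a2 * b2)))"
proof -
  have counit_a: "P * (Q * S (a * R)) = (\<Sum>(a1,a2)\<leftarrow>D a. sc (eps a1) (P * (Q * S (a2 * R))))"
    for P Q R
    by (rule lin_eq_sum_counit_left) auto
  have antipode_a: "sc (eps c) (P * W) = (\<Sum>(x,y)\<leftarrow>D c. P * S x * (y * W))" for c P W
    by (rule sum_antipode_left_between[symmetric])
  have "S (a * b) = (\<Sum>(b1,b2)\<leftarrow>D b. sc (eps b1) (S (a * b2)))"
    by (rule lin_eq_sum_counit_left) auto
  also have "\<dots> = (\<Sum>(b1,b2)\<leftarrow>D b. \<Sum>(b11,b12)\<leftarrow>D b1. S b11 * (b12 * S (a * b2)))"
    using sum_antipode_left_between[where P=1] by simp
  also have "\<dots> = (\<Sum>(b1,b2)\<leftarrow>D b. \<Sum>(b11,b12)\<leftarrow>D b1. \<Sum>(a1,a2)\<leftarrow>D a.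
      sc (eps a1) (S b11 * (b12 * S (a2 * b2))))"
    by (simp only: counit_a)
  also have "\<dots> = (\<Sum>(b1,b2)\<leftarrow>D b. \<Sum>(b11,b12)\<leftarrow>D b1. \<Sum>(a1,a2)\<leftarrow>D a. \<Sum>(a11,a12)\<leftarrow>D a1.
      S b11 * S a11 * (a12 * (b12 * S (a2 * b2))))"
    by (simp only: antipode_a)
  finally show ?thesis
    by (simp add: mult.assoc)
qed

lemma antipode_antimult: "S (a * b) = S b * S a"
  using antipode_mult_eq_sum antipode_mult_antipode_eq_sum[symmetric] by (rule trans)

definition S_inv :: "'h \<Rightarrow> 'h" where
  "S_inv = inv S"

lemma antipode_S_inv: "S (S_inv x) = x"
  unfolding S_inv_def using antipode_bij by (simp add: bij_def surj_f_inv_f)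

lemma lin_S_inv: "lin S_inv"
  using bij_module_hom_imp_inv_module_hom[of sc sc S] antipode_linear antipode_bij
  unfolding S_inv_def module_hom_iff_linear by blast

lemma skew_antipode: "(\<Sum>(x,y)\<leftarrow>D a. y * S_inv x) = sc (eps a) 1"
proof -
  have "S (\<Sum>(x,y)\<leftarrow>D a. y * S_inv x) = (\<Sum>(x,y)\<leftarrow>D a. x * S y)"
    by (simp add: lin_sum_list[OF antipode_linear] case_prod_unfold antipode_antimult antipode_S_inv)
  also have "\<dots> = S (sc (eps a) 1)"
    by (simp add: antipode_right VV.linear_scale[OF antipode_linear] antipode_one)
  finally show ?thesis
    using antipode_bij by (simp add: bij_def inj_eq)
qed

lemma D_mult_opposite:
  "tensor2_eq sc (D (b * a)) [(x' * x, y' * y). (x, y) \<leftarrow> D a, (x', y') \<leftarrow> D b]"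
  using D_mult[of b a]
  unfolding tensor2_eq_def sum_list_map_concat
  by (simp add: case_prod_unfold comp_def sum_list_commute[where ys="D a"])

end

section \<open>Finiteness from an eigenvector\<close>

text \<open>
  The argument is carried out for an abstract multiplication \<open>\<odot>\<close> making \<open>(H, \<odot>, D)\<close> a
  bialgebra with antipode \<open>Sg\<close> and skew antipode \<open>Tg\<close>.  Its two instances are \<open>H\<close> itself,
  with \<open>(S, S\<^sup>-\<^sup>1)\<close>, and the opposite algebra, with \<open>(S\<^sup>-\<^sup>1, S)\<close>; they handle
  left and right eigenvectors respectively.
\<close>
locale hopf_product = hopf sc D eps S
  for sc :: "'k::field \<Rightarrow> 'h::ring_1 \<Rightarrow> 'h" and D eps S +
  fixes m :: "'h \<Rightarrow> 'h \<Rightarrow> 'h" (infixl \<open>\<odot>\<close> 70) and Sg Tg :: "'h \<Rightarrow> 'h"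
  assumes lin_m_left: "lin (\<lambda>x. x \<odot> y)" and lin_m_right: "lin (\<lambda>y. x \<odot> y)"
    and m_assoc: "(x \<odot> y) \<odot> z = x \<odot> (y \<odot> z)"
    and m_one_left: "1 \<odot> x = x" and m_one_right: "x \<odot> 1 = x"
    and D_m: "tensor2_eq sc (D (a \<odot> b)) [(x \<odot> x', y \<odot> y'). (x, y) \<leftarrow> D a, (x', y') \<leftarrow> D b]"
    and lin_Sg: "lin Sg" and lin_Tg: "lin Tg"
    and antipode_m: "(\<Sum>(x,y)\<leftarrow>D a. Sg x \<odot> y) = sc (eps a) 1"
    and skew_antipode_m: "(\<Sum>(x,y)\<leftarrow>D a. y \<odot> Tg x) = sc (eps a) 1"
begin

lemma lin_m_left_compose [intro!]: "lin g \<Longrightarrow> lin (\<lambda>x. g x \<odot> c)"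
  by (rule lin_compose[OF lin_m_left])

lemma lin_m_right_compose [intro!]: "lin g \<Longrightarrow> lin (\<lambda>x. c \<odot> g x)"
  by (rule lin_compose[OF lin_m_right])

lemma m_scale_one_left: "sc c 1 \<odot> x = sc c x"
  using VV.linear_scale[OF lin_m_left] by (simp add: m_one_left)

lemma m_scale_one_right: "x \<odot> sc c 1 = sc c x"
  using VV.linear_scale[OF lin_m_right] by (simp add: m_one_right)

lemma sum_D_m:
  assumes "\<And>y. lin (\<lambda>x. f x y)" "\<And>x. lin (f x)"
  shows "(\<Sum>(x,y)\<leftarrow>D (a \<odot> b). f x y) = (\<Sum>(x,y)\<leftarrow>D a. \<Sum>(x',y')\<leftarrow>D b. f (x \<odot> x') (y \<odot> y'))"
  using sum_tensor2_eq[OF D_m assms] by (simp add: sum_list_map_concat case_prod_unfold comp_def)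

lemma mult_contract_eq:
  assumes \<phi>: "functional \<phi>"
  shows "a \<odot> contract \<phi> (D \<Lambda>) = (\<Sum>(p,q)\<leftarrow>D a. contract (\<lambda>x. \<phi> (Sg p \<odot> x)) (D (q \<odot> \<Lambda>)))"
proof -
  have antipode_inner: "(\<Sum>(p1,p2)\<leftarrow>D p. sc (\<phi> (Sg p1 \<odot> (p2 \<odot> x))) z) = sc (eps p * \<phi> x) z"
    for p x z
  proof -
    have "(\<Sum>(p1,p2)\<leftarrow>D p. sc (\<phi> (Sg p1 \<odot> (p2 \<odot> x))) z)
        = sc (\<phi> ((\<Sum>(p1,p2)\<leftarrow>D p. Sg p1 \<odot> p2) \<odot> x)) z"
      by (simp add: lin_sum_list[OF lin_scale_functional[OF \<phi> lin_m_left]] case_prod_unfold m_assoc)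
    also have "\<dots> = sc (eps p * \<phi> x) z"
      by (simp add: antipode_m m_scale_one_left VK.linear_scale[OF \<phi>])
    finally show ?thesis .
  qed
  have counit_a: "(\<Sum>(x,y)\<leftarrow>D \<Lambda>. sc (\<phi> x) (a \<odot> y))
      = (\<Sum>(p,q)\<leftarrow>D a. sc (eps p) (\<Sum>(x,y)\<leftarrow>D \<Lambda>. sc (\<phi> x) (q \<odot> y)))"
    by (rule lin_eq_sum_counit_left[where g="\<lambda>w. \<Sum>(x,y)\<leftarrow>D \<Lambda>. sc (\<phi> x) (w \<odot> y)"]) auto
  have "(\<Sum>(p,q)\<leftarrow>D a. contract (\<lambda>x. \<phi> (Sg p \<odot> x)) (D (q \<odot> \<Lambda>)))
      = (\<Sum>(p,q)\<leftarrow>D a. \<Sum>(q1,q2)\<leftarrow>D q. \<Sum>(x,y)\<leftarrow>D \<Lambda>. sc (\<phi> (Sg p \<odot> (q1 \<odot> x))) (q2 \<odot> y))"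
    unfolding contract_def
    by (intro sum_list_pairs_cong sum_D_m) (auto intro!: lin_scale_functional[OF \<phi>])
  also have "\<dots> = (\<Sum>(p,q)\<leftarrow>D a. \<Sum>(p1,p2)\<leftarrow>D p. \<Sum>(x,y)\<leftarrow>D \<Lambda>.
      sc (\<phi> (Sg p1 \<odot> (p2 \<odot> x))) (q \<odot> y))"
    by (rule sum_D_coassoc[symmetric]) (auto intro!: lin_scale_functional[OF \<phi>] lin_Sg)
  also have "\<dots> = (\<Sum>(p,q)\<leftarrow>D a. \<Sum>(x,y)\<leftarrow>D \<Lambda>. \<Sum>(p1,p2)\<leftarrow>D p.
      sc (\<phi> (Sg p1 \<odot> (p2 \<odot> x))) (q \<odot> y))"
    by (intro sum_list_pairs_cong sum_list_pairs_commute)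
  also have "\<dots> = (\<Sum>(p,q)\<leftarrow>D a. \<Sum>(x,y)\<leftarrow>D \<Lambda>. sc (eps p * \<phi> x) (q \<odot> y))"
    by (simp only: antipode_inner)
  also have "\<dots> = a \<odot> contract \<phi> (D \<Lambda>)"
  proof -
    have "a \<odot> contract \<phi> (D \<Lambda>) = (\<Sum>(x,y)\<leftarrow>D \<Lambda>. sc (\<phi> x) (a \<odot> y))"
      by (simp add: contract_def lin_sum_list[OF lin_m_right] VV.linear_scale[OF lin_m_right]
          case_prod_unfold)
    also note counit_a
    also have "(\<Sum>(p,q)\<leftarrow>D a. sc (eps p) (\<Sum>(x,y)\<leftarrow>D \<Lambda>. sc (\<phi> x) (q \<odot> y)))
        = (\<Sum>(p,q)\<leftarrow>D a. \<Sum>(x,y)\<leftarrow>D \<Lambda>. sc (eps p * \<phi> x) (q \<odot> y))"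
      by (simp add: lin_sum_list[OF lin_scale[OF lin_id]] case_prod_unfold)
    finally show ?thesis ..
  qed
  finally show ?thesis ..
qed

lemma lin_contract_Sg: "functional \<phi> \<Longrightarrow> lin (\<lambda>p. contract (\<lambda>x. \<phi> (Sg p \<odot> x)) l)"
  unfolding contract_def by (auto intro!: lin_scale_functional lin_Sg)

lemma mult_contract_in_span:
  assumes coideal: "\<forall>a\<in>A. \<exists>ts. tensor2_eq sc (D a) ts \<and> (\<forall>(x,y)\<in>set ts. y \<in> A)"
    and eigen: "\<forall>q\<in>A. q \<odot> \<Lambda> = sc (\<mu> q) \<Lambda>"
    and "a \<in> A" and \<phi>: "functional \<phi>"
  shows "a \<odot> contract \<phi> (D \<Lambda>) \<in> V.span (snd ` set (D \<Lambda>))"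
proof -
  obtain ts where ts: "tensor2_eq sc (D a) ts" "\<forall>(x,y)\<in>set ts. y \<in> A"
    using coideal \<open>a \<in> A\<close> by blast
  have \<phi>_Sg: "functional (\<lambda>x. \<phi> (Sg p \<odot> x))" for p
    by (rule functional_comp_lin[OF \<phi> lin_m_right])
  have "a \<odot> contract \<phi> (D \<Lambda>) = (\<Sum>(p,q)\<leftarrow>D a. contract (\<lambda>x. \<phi> (Sg p \<odot> x)) (D (q \<odot> \<Lambda>)))"
    by (rule mult_contract_eq[OF \<phi>])
  also have "\<dots> = (\<Sum>(p,q)\<leftarrow>ts. contract (\<lambda>x. \<phi> (Sg p \<odot> x)) (D (q \<odot> \<Lambda>)))"
    by (rule sum_tensor2_eq[OF ts(1) lin_contract_Sg[OF \<phi>] lin_contract_D[OF \<phi>_Sg lin_m_left]])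
  also have "\<dots> = (\<Sum>(p,q)\<leftarrow>ts. sc (\<mu> q) (contract (\<lambda>x. \<phi> (Sg p \<odot> x)) (D \<Lambda>)))"
    using ts(2) eigen
    by (intro sum_list_pairs_cong) (auto simp: VV.linear_scale[OF lin_contract_D[OF \<phi>_Sg lin_id]])
  also have "\<dots> \<in> V.span (snd ` set (D \<Lambda>))"
    unfolding case_prod_unfold by (intro V.span_sum_list V.span_scale contract_in_span_right_legs)
  finally show ?thesis .
qed


lemma scale_eq_sum_skew_antipode:
  assumes \<psi>: "functional \<psi>"
  shows "sc (\<psi> \<Lambda>) a = (\<Sum>(x,y)\<leftarrow>D \<Lambda>. \<Sum>(u,v)\<leftarrow>D x. sc (\<psi> u) ((a \<odot> y) \<odot> Tg v))"
proof -
  have skew_inner: "(\<Sum>(u,v)\<leftarrow>D y. sc (\<psi> x) ((a \<odot> v) \<odot> Tg u)) = sc (\<psi> x) (sc (eps y) a)"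
    for x y
  proof -
    have "(\<Sum>(u,v)\<leftarrow>D y. sc (\<psi> x) ((a \<odot> v) \<odot> Tg u))
        = sc (\<psi> x) (a \<odot> (\<Sum>(u,v)\<leftarrow>D y. v \<odot> Tg u))"
      by (simp add: lin_sum_list[OF lin_scale[OF lin_m_right]] case_prod_unfold m_assoc)
    then show ?thesis
      by (simp add: skew_antipode_m m_scale_one_right)
  qed
  have "\<psi> \<Lambda> = (\<Sum>(x,y)\<leftarrow>D \<Lambda>. eps y * \<psi> x)"
    using arg_cong[OF counit_right[of \<Lambda>], of \<psi>]
    by (simp add: functional_sum_list[OF \<psi>] VK.linear_scale[OF \<psi>] case_prod_unfold)
  then have "sc (\<psi> \<Lambda>) a = (\<Sum>(x,y)\<leftarrow>D \<Lambda>. sc (\<psi> x) (sc (eps y) a))"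
    by (simp add: scale_sum_list_left case_prod_unfold mult.commute)
  also have "\<dots> = (\<Sum>(x,y)\<leftarrow>D \<Lambda>. \<Sum>(u,v)\<leftarrow>D y. sc (\<psi> x) ((a \<odot> v) \<odot> Tg u))"
    by (simp only: skew_inner)
  also have "\<dots> = (\<Sum>(x,y)\<leftarrow>D \<Lambda>. \<Sum>(u,v)\<leftarrow>D x. sc (\<psi> u) ((a \<odot> y) \<odot> Tg v))"
    by (rule sum_D_coassoc[symmetric]) (auto intro!: lin_scale_functional[OF \<psi>] lin_Tg)
  finally show ?thesis .
qed

lemma subset_span_if_eigenvector:
  assumes coideal: "\<forall>a\<in>A. \<exists>ts. tensor2_eq sc (D a) ts \<and> (\<forall>(x,y)\<in>set ts. y \<in> A)"
    and eigen: "\<forall>q\<in>A. q \<odot> \<Lambda> = sc (\<mu> q) \<Lambda>" and "\<Lambda> \<noteq> 0"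
  shows "\<exists>F. finite F \<and> A \<subseteq> V.span F"
proof -
  obtain b where b: "coord \<Lambda> b \<noteq> 0"
    using coord_nonzero \<open>\<Lambda> \<noteq> 0\<close> by blast
  define Y where "Y = snd ` set (D \<Lambda>)"
  define F where "F = (\<lambda>(y,v). y \<odot> Tg v) ` (Y \<times> (\<Union>e\<in>leg_support (D \<Lambda>). snd ` set (D e)))"
  have "finite F"
    unfolding F_def Y_def using finite_leg_support by auto
  moreover have "A \<subseteq> V.span F"
  proof
    fix a assume "a \<in> A"
    define g where "g x y = (\<Sum>(u,v)\<leftarrow>D x. sc (coord u b) ((a \<odot> y) \<odot> Tg v))" for x y
    have "sc (coord \<Lambda> b) a = (\<Sum>(x,y)\<leftarrow>D \<Lambda>. g x y)"
      unfolding g_def by (rule scale_eq_sum_skew_antipode[OF functional_coord])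
    also have "\<dots> = (\<Sum>e\<in>leg_support (D \<Lambda>). g e (contract (\<lambda>x. coord x e) (D \<Lambda>)))"
      by (rule sum_bilinear_contract[OF _ _ finite_leg_support])
        (auto simp: g_def intro!: lin_sum_D lin_scale_functional[OF functional_coord] lin_Tg)
    also have "\<dots> \<in> V.span F"
    proof (rule V.span_sum)
      fix e assume e: "e \<in> leg_support (D \<Lambda>)"
      have "a \<odot> contract (\<lambda>x. coord x e) (D \<Lambda>) \<in> V.span Y"
        unfolding Y_def by (rule mult_contract_in_span[OF coideal eigen \<open>a \<in> A\<close> functional_coord])
      then have "(a \<odot> contract (\<lambda>x. coord x e) (D \<Lambda>)) \<odot> Tg v \<in> V.span F"
        if "v \<in> snd ` set (D e)" for v
      proof -
        have "(\<lambda>y. y \<odot> Tg v) ` Y \<subseteq> F"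
          using e that unfolding F_def by force
        then show ?thesis
          using VV.linear_span_image[OF lin_m_left, of "Tg v" Y] V.span_mono
            \<open>a \<odot> contract (\<lambda>x. coord x e) (D \<Lambda>) \<in> V.span Y\<close> by blast
      qed
      then show "g e (contract (\<lambda>x. coord x e) (D \<Lambda>)) \<in> V.span F"
        unfolding g_def case_prod_unfold by (intro V.span_sum_list V.span_scale) auto
    qed
    finally have "sc (inverse (coord \<Lambda> b)) (sc (coord \<Lambda> b) a) \<in> V.span F"
      by (rule V.span_scale)
    then show "a \<in> V.span F"
      using b by simp
  qed
  ultimately show ?thesis by blast
qed

end

context hopf
begin

sublocale left: hopf_product sc D eps S "(*)" S S_inv
  by (intro hopf_product.intro hopf_axioms hopf_product_axioms.intro)
    (rule lin_mult_right[OF lin_id] lin_mult_left[OF lin_id] mult.assoc mult_1_left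
      mult_1_right D_mult antipode_linear lin_S_inv antipode_left skew_antipode)+

sublocale right: hopf_product sc D eps S "\<lambda>x y. y * x" S_inv S
  by (intro hopf_product.intro hopf_axioms hopf_product_axioms.intro)
    (rule lin_mult_right[OF lin_id] lin_mult_left[OF lin_id] mult.assoc[symmetric]
      mult_1_left mult_1_right D_mult_opposite antipode_linear lin_S_inv antipode_left skew_antipode)+

end

theorem mainTheorem8:
  fixes sc :: "'k::field \<Rightarrow> 'h::ring_1 \<Rightarrow> 'h"
    and D :: "'h \<Rightarrow> ('h \<times> 'h) list"
    and eps :: "'h \<Rightarrow> 'k"
    and S :: "'h \<Rightarrow> 'h"
    and A :: "'h set"
    and \<mu> :: "'h \<Rightarrow> 'k"
  assumes "hopf_algebra sc D eps S"
    and "left_coideal_subalgebra sc D A"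
    and "multiplicative_functional sc A \<mu>"
    and "\<exists>a\<in>A. \<mu> a \<noteq> 0"
    and "(\<exists>\<Lambda>\<in>L_space sc A \<mu>. \<Lambda> \<noteq> 0) \<or> (\<exists>\<Lambda>\<in>R_space sc A \<mu>. \<Lambda> \<noteq> 0)"
  shows "finite_dim sc A"
proof -
  interpret hopf sc D eps S
    by (rule hopf.intro) (rule assms(1))
  have subspace: "V.subspace A"
    and coideal: "\<forall>a\<in>A. \<exists>ts. tensor2_eq sc (D a) ts \<and> (\<forall>(x,y)\<in>set ts. y \<in> A)"
    using assms(2) unfolding left_coideal_subalgebra_def by blast+
  obtain F where "finite F" "A \<subseteq> V.span F"
    using assms(5)
  proof (elim disjE bexE)
    fix \<Lambda> assume "\<Lambda> \<in> L_space sc A \<mu>" "\<Lambda> \<noteq> 0"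
    then show thesis
      using left.subset_span_if_eigenvector[OF coideal] that unfolding L_space_def by blast
  next
    fix \<Lambda> assume "\<Lambda> \<in> R_space sc A \<mu>" "\<Lambda> \<noteq> 0"
    then show thesis
      using right.subset_span_if_eigenvector[OF coideal] that unfolding R_space_def by blast
  qed
  then show ?thesis
    by (rule finite_dim_if_subset_span[OF subspace])
qed

end
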